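(* Let $p$ be a prime, $n\ge1$, $s>0$ an integer, and let $\mu$ be an ergodic conjugation-invariant Borel probability measure on ${\rm Sub}(\mathcal{L}_{n,p})$ with $\mu(\pi_1^{-1}(s))=1$. Then $\mu$ is supported on a single finite conjugacy class of subgroups. Consequently, the set of ergodic conjugation-invariant Borel probability measures $\mu$ on ${\rm Sub}(\mathcal{L}_{n,p})$ with $\mu(\pi_1^{-1}(s))=1$ for some $s\ge1$ is countable.
   Context: $\mathcal{L}_{n,p}=\left(\bigoplus_{\mathbb{Z}}(\mathbb{Z}/p\mathbb{Z})^n\right)\rtimes\mathbb{Z}$; ${\rm Sub}(\mathcal{L}_{n,p})$ is the compact space of its subgroups (topology from $\{0,1\}^{\mathcal{L}_{n,p}}$), on which $\mathcal{L}_{n,p}$ acts by conjugation. For a subgroup $V$, $\pi_1(V)\ge0$ is defined by: the projection of $V$ to $\mathbb{Z}$ equals $\pi_1(V)\mathbb{Z}$. *)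

theory Defs
  imports "HOL-Analysis.Analysis" "HOL-Probability.Probability" "HOL-Algebra.Group"
begin

text \<open>Elements of L_{n,p} = (\<Oplus>_Z (Z/pZ)^n) \<rtimes> Z are pairs (f,k): f i j is the j-th coordinate
(j < n) of the i-th summand, a residue in {0..<p}; f is finitely supported.\<close>

definition Lcarrier :: "nat \<Rightarrow> nat \<Rightarrow> ((int \<Rightarrow> nat \<Rightarrow> int) \<times> int) set" where
  "Lcarrier n p = {(f, k). (\<forall>i j. 0 \<le> f i j \<and> f i j < int p) \<and> (\<forall>i j. n \<le> j \<longrightarrow> f i j = 0)
                           \<and> finite {i. \<exists>j. f i j \<noteq> 0}}"

definition Lgrp :: "nat \<Rightarrow> nat \<Rightarrow> ((int \<Rightarrow> nat \<Rightarrow> int) \<times> int) monoid" where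
  "Lgrp n p = \<lparr> carrier = Lcarrier n p,
      mult = (\<lambda>(f, k) (g, l). (\<lambda>i j. (f i j + g (i - k) j) mod int p, k + l)),
      one = (\<lambda>_ _. 0, 0) \<rparr>"

definition SubL :: "nat \<Rightarrow> nat \<Rightarrow> ((int \<Rightarrow> nat \<Rightarrow> int) \<times> int) set set" where
  "SubL n p = {H. subgroup H (Lgrp n p)}"

definition SubTop :: "nat \<Rightarrow> nat \<Rightarrow> ((int \<Rightarrow> nat \<Rightarrow> int) \<times> int) set topology" where
  "SubTop n p = pullback_topology (SubL n p) (\<lambda>H. restrict (\<lambda>g. g \<in> H) (Lcarrier n p))
                   (product_topology (\<lambda>_. discrete_topology (UNIV :: bool set)) (Lcarrier n p))"

definition borel_of_top :: "'a topology \<Rightarrow> 'a measure" where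
  "borel_of_top X = sigma (topspace X) {U. openin X U}"

definition conjL :: "nat \<Rightarrow> nat \<Rightarrow> (int \<Rightarrow> nat \<Rightarrow> int) \<times> int \<Rightarrow>
      ((int \<Rightarrow> nat \<Rightarrow> int) \<times> int) set \<Rightarrow> ((int \<Rightarrow> nat \<Rightarrow> int) \<times> int) set" where
  "conjL n p g H = (\<lambda>h. g \<otimes>\<^bsub>Lgrp n p\<^esub> h \<otimes>\<^bsub>Lgrp n p\<^esub> inv\<^bsub>Lgrp n p\<^esub> g) ` H"

definition borel_prob_Sub :: "nat \<Rightarrow> nat \<Rightarrow> ((int \<Rightarrow> nat \<Rightarrow> int) \<times> int) set measure \<Rightarrow> bool" where
  "borel_prob_Sub n p \<mu> \<longleftrightarrow> prob_space \<mu> \<and> sets \<mu> = sets (borel_of_top (SubTop n p))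
      \<and> space \<mu> = topspace (SubTop n p)"

definition conj_invariant :: "nat \<Rightarrow> nat \<Rightarrow> ((int \<Rightarrow> nat \<Rightarrow> int) \<times> int) set measure \<Rightarrow> bool" where
  "conj_invariant n p \<mu> \<longleftrightarrow> (\<forall>g \<in> Lcarrier n p. \<forall>A \<in> sets \<mu>.
      emeasure \<mu> ((conjL n p g -` A) \<inter> space \<mu>) = emeasure \<mu> A)"

definition conj_ergodic :: "nat \<Rightarrow> nat \<Rightarrow> ((int \<Rightarrow> nat \<Rightarrow> int) \<times> int) set measure \<Rightarrow> bool" where
  "conj_ergodic n p \<mu> \<longleftrightarrow> (\<forall>A \<in> sets \<mu>.
      (\<forall>g \<in> Lcarrier n p. (conjL n p g -` A) \<inter> space \<mu> = A) \<longrightarrow> emeasure \<mu> A = 0 \<or> emeasure \<mu> A = 1)"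

text \<open>\<pi>_1(V) = s means: projection of V to Z equals sZ.\<close>
definition pi1_fiber :: "nat \<Rightarrow> nat \<Rightarrow> int \<Rightarrow> ((int \<Rightarrow> nat \<Rightarrow> int) \<times> int) set set" where
  "pi1_fiber n p s = {V \<in> SubL n p. snd ` V = range (\<lambda>m. s * m)}"

definition conj_class :: "nat \<Rightarrow> nat \<Rightarrow> ((int \<Rightarrow> nat \<Rightarrow> int) \<times> int) set \<Rightarrow> ((int \<Rightarrow> nat \<Rightarrow> int) \<times> int) set set" where
  "conj_class n p H = (\<lambda>g. conjL n p g H) ` Lcarrier n p"

end

theory Submission
  imports Defs "HOL-Algebra.Elementary_Groups"
begin

text \<open>
  Let \<open>V\<close> be a subgroup with \<open>\<pi>\<^sub>1(V) = s\<int>\<close>, \<open>s > 0\<close>, and \<open>(f, s) \<in> V\<close>. Every element of \<open>V\<close> is an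
  element of the base part \<open>W = {w. (w, 0) \<in> V}\<close> times a power of \<open>(f, s)\<close>, so \<open>V\<close> is determined by \<open>W\<close>
  and \<open>f\<close>. Conjugation by \<open>(f, s)\<close> acts on \<open>W\<close> as the shift by \<open>s\<close>, so \<open>W\<close> is a shift-invariant
  subgroup of \<open>\<Oplus>\<^sub>\<int> (\<int>/p)\<^sup>n\<close>. For such \<open>W\<close> the sets of top coefficients of the elements supported
  in \<open>[0, k]\<close> grow along \<open>k, k + s, \<dots>\<close> inside a finite set, hence stabilise from some \<open>N\<close> on, and
  then \<open>W\<close> is generated, under shifts, by its elements supported in \<open>[0, N]\<close>: finitely many data.
  Hence the fibre \<open>\<pi>\<^sub>1\<^sup>-\<^sup>1(s)\<close> is countable.

  Singletons are Borel, so a probability measure on the countable fibre has an atom \<open>H\<close>. By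
  invariance all conjugates of \<open>H\<close> carry the same positive mass, so the conjugacy class of \<open>H\<close> is
  finite, and by ergodicity it has full measure. The measure is then the uniform measure on that
  class, so it is determined by a finite subset of the countable union of the fibres.
\<close>

lemma mem_Lcarrier_iff:
  "(f, k) \<in> Lcarrier n p \<longleftrightarrow> (\<forall>i j. 0 \<le> f i j \<and> f i j < int p) \<and> (\<forall>i j. n \<le> j \<longrightarrow> f i j = 0)
                              \<and> finite {i. \<exists>j. f i j \<noteq> 0}"
  by (simp add: Lcarrier_def)

lemma Lgrp_carrier [simp]: "carrier (Lgrp n p) = Lcarrier n p"
  by (simp add: Lgrp_def)

lemma Lgrp_mult: "(f, k) \<otimes>\<^bsub>Lgrp n p\<^esub> (g, l) = (\<lambda>i j. (f i j + g (i - k) j) mod int p, k + l)"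
  by (simp add: Lgrp_def)

lemma Lgrp_one: "\<one>\<^bsub>Lgrp n p\<^esub> = (\<lambda>_ _. 0, 0)"
  by (simp add: Lgrp_def)

lemma finite_support_shift:
  fixes g :: "int \<Rightarrow> 'b \<Rightarrow> 'c::zero"
  assumes "finite {i. \<exists>j. g i j \<noteq> 0}"
  shows "finite {i. \<exists>j. g (i - k) j \<noteq> 0}"
proof -
  have "{i. \<exists>j. g (i - k) j \<noteq> 0} = (\<lambda>i. i + k) ` {i. \<exists>j. g i j \<noteq> 0}"
    by (auto simp: image_iff) (metis diff_add_cancel)
  thus ?thesis using assms by simp
qed

lemma Lgrp_mult_closed:
  assumes "0 < p" "x \<in> Lcarrier n p" "y \<in> Lcarrier n p"
  shows "x \<otimes>\<^bsub>Lgrp n p\<^esub> y \<in> Lcarrier n p"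
proof -
  obtain f k g l where xy: "x = (f, k)" "y = (g, l)" by fastforce
  have "{i. \<exists>j. (f i j + g (i - k) j) mod int p \<noteq> 0} \<subseteq> {i. \<exists>j. f i j \<noteq> 0} \<union> {i. \<exists>j. g (i - k) j \<noteq> 0}"
    by auto (metis add.right_neutral add_0 mod_0)
  moreover have "finite ({i. \<exists>j. f i j \<noteq> 0} \<union> {i. \<exists>j. g (i - k) j \<noteq> 0})"
    using assms finite_support_shift by (auto simp: xy mem_Lcarrier_iff)
  ultimately show ?thesis
    using assms by (auto simp: xy Lgrp_mult mem_Lcarrier_iff intro: finite_subset)
qed

lemma Lcarrier_neg_shift:
  assumes "0 < p" "(f, k) \<in> Lcarrier n p"
  shows "(\<lambda>i j. (- f (i + k) j) mod int p, - k) \<in> Lcarrier n p"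
proof -
  have "{i. \<exists>j. (- f (i + k) j) mod int p \<noteq> 0} \<subseteq> {i. \<exists>j. f (i + k) j \<noteq> 0}"
    by auto (metis minus_zero mod_0)
  moreover have "finite {i. \<exists>j. f (i + k) j \<noteq> 0}"
    using assms finite_support_shift[of f "- k"] by (simp add: mem_Lcarrier_iff)
  ultimately show ?thesis
    using assms by (auto simp: mem_Lcarrier_iff intro: finite_subset)
qed

lemma Lgrp_neg_shift_mult:
  "(\<lambda>i j. (- f (i + k) j) mod int p, - k) \<otimes>\<^bsub>Lgrp n p\<^esub> (f, k) = \<one>\<^bsub>Lgrp n p\<^esub>"
  by (simp add: Lgrp_mult Lgrp_one mod_add_left_eq)

lemma group_Lgrp:
  assumes "0 < p" shows "group (Lgrp n p)"
proof (rule groupI)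
  fix x y assume "x \<in> carrier (Lgrp n p)" "y \<in> carrier (Lgrp n p)"
  thus "x \<otimes>\<^bsub>Lgrp n p\<^esub> y \<in> carrier (Lgrp n p)" using assms by (simp add: Lgrp_mult_closed)
next
  fix x y z assume "x \<in> carrier (Lgrp n p)" "y \<in> carrier (Lgrp n p)" "z \<in> carrier (Lgrp n p)"
  thus "x \<otimes>\<^bsub>Lgrp n p\<^esub> y \<otimes>\<^bsub>Lgrp n p\<^esub> z = x \<otimes>\<^bsub>Lgrp n p\<^esub> (y \<otimes>\<^bsub>Lgrp n p\<^esub> z)"
    by (cases x, cases y, cases z) (auto simp: Lgrp_mult mod_add_left_eq mod_add_right_eq algebra_simps)
next
  fix x assume "x \<in> carrier (Lgrp n p)"
  thus "\<one>\<^bsub>Lgrp n p\<^esub> \<otimes>\<^bsub>Lgrp n p\<^esub> x = x"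
    by (cases x) (auto simp: Lgrp_mult Lgrp_one mem_Lcarrier_iff)
next
  fix x assume x: "x \<in> carrier (Lgrp n p)"
  obtain f k where x_eq: "x = (f, k)" by fastforce
  show "\<exists>y \<in> carrier (Lgrp n p). y \<otimes>\<^bsub>Lgrp n p\<^esub> x = \<one>\<^bsub>Lgrp n p\<^esub>"
    using Lcarrier_neg_shift[OF assms, where f = f and k = k] Lgrp_neg_shift_mult[where f = f and k = k] x by (auto simp: x_eq)
qed (use assms in \<open>simp add: Lgrp_one mem_Lcarrier_iff\<close>)

lemma Lgrp_inv:
  assumes "0 < p" "(f, k) \<in> Lcarrier n p"
  shows "inv\<^bsub>Lgrp n p\<^esub> (f, k) = (\<lambda>i j. (- f (i + k) j) mod int p, - k)"
  using group.inv_equality[OF group_Lgrp Lgrp_neg_shift_mult] Lcarrier_neg_shift assms by simp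

lemma Lgrp_inv_closed: "0 < p \<Longrightarrow> g \<in> Lcarrier n p \<Longrightarrow> inv\<^bsub>Lgrp n p\<^esub> g \<in> Lcarrier n p"
  using group.inv_closed[OF group_Lgrp] by simp

lemma snd_Lgrp_mult: "snd (x \<otimes>\<^bsub>Lgrp n p\<^esub> y) = snd x + snd y"
  by (cases x, cases y) (simp add: Lgrp_mult)

lemma snd_Lgrp_inv: "0 < p \<Longrightarrow> x \<in> Lcarrier n p \<Longrightarrow> snd (inv\<^bsub>Lgrp n p\<^esub> x) = - snd x"
  by (cases x) (simp add: Lgrp_inv)

lemma group_hom_snd: "0 < p \<Longrightarrow> group_hom (Lgrp n p) integer_group snd"
  by (auto simp: group_hom_def group_hom_axioms_def group_Lgrp hom_def Lgrp_mult)

context group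
begin

lemma inv_mult_cancel_left: "x \<in> carrier G \<Longrightarrow> y \<in> carrier G \<Longrightarrow> inv x \<otimes> (x \<otimes> y) = y"
  by (simp add: m_assoc[symmetric])

lemma conjugation_hom: "g \<in> carrier G \<Longrightarrow> (\<lambda>h. g \<otimes> h \<otimes> inv g) \<in> hom G G"
  by (auto simp: hom_def m_assoc inv_mult_cancel_left)

lemma subgroup_conjugate:
  "subgroup H G \<Longrightarrow> g \<in> carrier G \<Longrightarrow> subgroup ((\<lambda>h. g \<otimes> h \<otimes> inv g) ` H) G"
  by (rule group_hom.subgroup_img_is_subgroup)
     (simp_all add: group_hom_def group_hom_axioms_def group_axioms conjugation_hom)

lemma conjugate_conjugate:
  assumes "H \<subseteq> carrier G" "a \<in> carrier G" "b \<in> carrier G"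
  shows "(\<lambda>h. a \<otimes> h \<otimes> inv a) ` (\<lambda>h. b \<otimes> h \<otimes> inv b) ` H = (\<lambda>h. (a \<otimes> b) \<otimes> h \<otimes> inv (a \<otimes> b)) ` H"
proof -
  have "a \<otimes> (b \<otimes> h \<otimes> inv b) \<otimes> inv a = (a \<otimes> b) \<otimes> h \<otimes> inv (a \<otimes> b)" if "h \<in> H" for h
    using assms that by (auto simp: inv_mult_group m_assoc)
  thus ?thesis by (auto simp: image_image image_iff)
qed

lemma conjugate_one: "H \<subseteq> carrier G \<Longrightarrow> (\<lambda>h. \<one> \<otimes> h \<otimes> inv \<one>) ` H = H"
  by (auto simp: image_iff subset_iff)

end

lemma SubL_subset_Lcarrier: "V \<in> SubL n p \<Longrightarrow> V \<subseteq> Lcarrier n p"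
  by (metis SubL_def Lgrp_carrier mem_Collect_eq subgroup.subset)

lemma conjL_in_SubL: "0 < p \<Longrightarrow> V \<in> SubL n p \<Longrightarrow> g \<in> Lcarrier n p \<Longrightarrow> conjL n p g V \<in> SubL n p"
  using group.subgroup_conjugate[OF group_Lgrp] by (simp add: SubL_def conjL_def)

lemma conjL_conjL:
  "\<lbrakk>0 < p; V \<subseteq> Lcarrier n p; a \<in> Lcarrier n p; b \<in> Lcarrier n p\<rbrakk>
    \<Longrightarrow> conjL n p a (conjL n p b V) = conjL n p (a \<otimes>\<^bsub>Lgrp n p\<^esub> b) V"
  using group.conjugate_conjugate[OF group_Lgrp] by (simp add: conjL_def)

lemma conjL_one: "0 < p \<Longrightarrow> V \<subseteq> Lcarrier n p \<Longrightarrow> conjL n p \<one>\<^bsub>Lgrp n p\<^esub> V = V"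
  using group.conjugate_one[OF group_Lgrp] by (simp add: conjL_def)

lemma conjL_inv_conjL:
  assumes "0 < p" "V \<subseteq> Lcarrier n p" "g \<in> Lcarrier n p"
  shows "conjL n p (inv\<^bsub>Lgrp n p\<^esub> g) (conjL n p g V) = V"
proof -
  have "conjL n p (inv\<^bsub>Lgrp n p\<^esub> g) (conjL n p g V) = conjL n p (inv\<^bsub>Lgrp n p\<^esub> g \<otimes>\<^bsub>Lgrp n p\<^esub> g) V"
    using assms by (simp add: conjL_conjL Lgrp_inv_closed)
  also have "inv\<^bsub>Lgrp n p\<^esub> g \<otimes>\<^bsub>Lgrp n p\<^esub> g = \<one>\<^bsub>Lgrp n p\<^esub>"
    using group.l_inv[OF group_Lgrp[OF assms(1)]] assms(3) by simp
  finally show ?thesis using assms by (simp add: conjL_one)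
qed

lemma conjL_snd:
  assumes "0 < p" "g \<in> Lcarrier n p" "V \<subseteq> Lcarrier n p"
  shows "snd ` conjL n p g V = snd ` V"
proof -
  have "snd (g \<otimes>\<^bsub>Lgrp n p\<^esub> h \<otimes>\<^bsub>Lgrp n p\<^esub> inv\<^bsub>Lgrp n p\<^esub> g) = snd h" if "h \<in> V" for h
    using assms that by (auto simp: snd_Lgrp_mult snd_Lgrp_inv)
  thus ?thesis unfolding conjL_def image_image by (intro image_cong) auto
qed

lemma conjL_in_pi1_fiber:
  "0 < p \<Longrightarrow> V \<in> pi1_fiber n p t \<Longrightarrow> g \<in> Lcarrier n p \<Longrightarrow> conjL n p g V \<in> pi1_fiber n p t"
  by (simp add: pi1_fiber_def conjL_in_SubL conjL_snd SubL_subset_Lcarrier)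

lemma conj_class_subset_pi1_fiber:
  "0 < p \<Longrightarrow> H \<in> pi1_fiber n p t \<Longrightarrow> conj_class n p H \<subseteq> pi1_fiber n p t"
  by (auto simp: conj_class_def conjL_in_pi1_fiber)

lemma self_in_conj_class: "0 < p \<Longrightarrow> H \<in> SubL n p \<Longrightarrow> H \<in> conj_class n p H"
  unfolding conj_class_def
  by (rule image_eqI[where x = "\<one>\<^bsub>Lgrp n p\<^esub>"])
     (simp add: conjL_one SubL_subset_Lcarrier, simp add: Lgrp_one mem_Lcarrier_iff)

lemma conjL_vimage_conj_class:
  assumes "0 < p" "H \<in> SubL n p" "g \<in> Lcarrier n p"
  shows "conjL n p g -` conj_class n p H \<inter> SubL n p = conj_class n p H"
proof -
  have H: "H \<subseteq> Lcarrier n p" using SubL_subset_Lcarrier[OF assms(2)] .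
  have "V \<in> conj_class n p H" if "V \<in> SubL n p" "conjL n p g V = conjL n p h H" "h \<in> Lcarrier n p" for V h
  proof -
    have inv_g: "inv\<^bsub>Lgrp n p\<^esub> g \<in> Lcarrier n p" using assms by (simp add: Lgrp_inv_closed)
    have "V = conjL n p (inv\<^bsub>Lgrp n p\<^esub> g) (conjL n p h H)"
      using conjL_inv_conjL[OF assms(1) SubL_subset_Lcarrier[OF that(1)] assms(3)] that(2) by simp
    also have "\<dots> = conjL n p (inv\<^bsub>Lgrp n p\<^esub> g \<otimes>\<^bsub>Lgrp n p\<^esub> h) H"
      using assms H that inv_g by (simp add: conjL_conjL)
    finally show ?thesis using assms that inv_g by (simp add: conj_class_def Lgrp_mult_closed)
  qed
  moreover have "conjL n p g (conjL n p h H) \<in> conj_class n p H" if "h \<in> Lcarrier n p" for h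
    using assms H that by (simp add: conjL_conjL conj_class_def Lgrp_mult_closed)
  ultimately show ?thesis
    using assms by (auto simp: conj_class_def conjL_in_SubL)
qed

section \<open>Countability and Borel singletons\<close>

lemma countable_Lcarrier: "countable (Lcarrier n p)"
proof -
  define graph where "graph f = {(i, j, f i j) | i j. f i j \<noteq> 0}" for f :: "int \<Rightarrow> nat \<Rightarrow> int"
  define decode where "decode A = (\<lambda>i j. \<Sum>{v. (i, j, v) \<in> A})" for A :: "(int \<times> nat \<times> int) set"
  \<comment> \<open>Each \<open>{v. (i, j, v) \<in> graph f}\<close> has at most one element, so summing it recovers \<open>f i j\<close>.\<close>
  have decode_graph: "decode (graph f) = f" for f
  proof (intro ext)
    fix i j
    have "{v. (i, j, v) \<in> graph f} = (if f i j = 0 then {} else {f i j})"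
      by (auto simp: graph_def)
    thus "decode (graph f) i j = f i j" by (simp add: decode_def)
  qed
  have "finite (graph f)" if "(f, k) \<in> Lcarrier n p" for f k
  proof -
    have "graph f \<subseteq> (\<lambda>(i, j). (i, j, f i j)) ` ({i. \<exists>j. f i j \<noteq> 0} \<times> {..<n})"
      using that by (force simp: graph_def mem_Lcarrier_iff not_le)
    moreover have "finite {i. \<exists>j. f i j \<noteq> 0}" using that by (simp add: mem_Lcarrier_iff)
    ultimately show ?thesis by (blast intro: finite_subset finite_imageI finite_cartesian_product finite_lessThan)
  qed
  hence "(f, k) \<in> (\<lambda>(A, k). (decode A, k)) ` ({A. finite A \<and> A \<subseteq> UNIV} \<times> UNIV)"
    if "(f, k) \<in> Lcarrier n p" for f k
    using that by (intro image_eqI[where x = "(graph f, k)"]) (auto simp: decode_graph)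
  hence "Lcarrier n p \<subseteq> (\<lambda>(A, k). (decode A, k)) ` ({A. finite A \<and> A \<subseteq> UNIV} \<times> UNIV)"
    by auto
  moreover have "countable ({A :: (int \<times> nat \<times> int) set. finite A \<and> A \<subseteq> UNIV} \<times> (UNIV :: int set))"
    by (intro countable_SIGMA countable_Collect_finite_subset) auto
  ultimately show ?thesis by (blast intro: countable_subset countable_image)
qed

lemma topspace_SubTop [simp]: "topspace (SubTop n p) = SubL n p"
  by (auto simp: SubTop_def topspace_pullback_topology topspace_product_topology PiE_iff)

lemma openin_SubTop_mem:
  assumes "g \<in> Lcarrier n p"
  shows "openin (SubTop n p) {V \<in> SubL n p. (g \<in> V) = b}"
proof -
  let ?T = "product_topology (\<lambda>_. discrete_topology (UNIV :: bool set)) (Lcarrier n p)"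
  let ?U = "{x \<in> topspace ?T. x g \<in> {b}}"
  have "openin ?T ?U"
    by (rule openin_continuous_map_preimage[OF continuous_map_product_projection[OF assms]]) simp
  moreover have "{V \<in> SubL n p. (g \<in> V) = b} = (\<lambda>H. restrict (\<lambda>g. g \<in> H) (Lcarrier n p)) -` ?U \<inter> SubL n p"
    using assms by (auto simp: topspace_product_topology PiE_iff)
  ultimately show ?thesis unfolding SubTop_def openin_pullback_topology by blast
qed

lemma sets_borel_of_top: "sets (borel_of_top X) = sigma_sets (topspace X) {U. openin X U}"
  unfolding borel_of_top_def by (rule sets_measure_of) (auto dest: openin_subset)

lemma space_borel_prob_Sub: "borel_prob_Sub n p \<mu> \<Longrightarrow> space \<mu> = SubL n p"
  by (simp add: borel_prob_Sub_def)

lemma singleton_in_sets_borel_prob_Sub: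
  assumes "borel_prob_Sub n p \<mu>" "H \<in> SubL n p"
  shows "{H} \<in> sets \<mu>"
proof -
  let ?A = "\<lambda>g. {V \<in> SubL n p. (g \<in> V) = (g \<in> H)}"
  have "Lcarrier n p \<noteq> {}"
    using subgroup.one_closed assms(2) SubL_subset_Lcarrier by (fastforce simp: SubL_def)
  hence "(\<Inter>g\<in>Lcarrier n p. ?A g) \<in> sets \<mu>"
    using assms(1) countable_Lcarrier openin_SubTop_mem
    by (intro sets.countable_INT') (auto simp: borel_prob_Sub_def sets_borel_of_top)
  moreover have "(\<Inter>g\<in>Lcarrier n p. ?A g) = {H}"
    using assms(2) \<open>Lcarrier n p \<noteq> {}\<close> SubL_subset_Lcarrier by blast
  ultimately show ?thesis by simp
qed

section \<open>Shift-invariant subgroups of the base group\<close>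

definition shift_by :: "int \<Rightarrow> (int \<Rightarrow> 'a) \<Rightarrow> int \<Rightarrow> 'a" where
  "shift_by m w i = w (i - m)"

definition add_mod :: "nat \<Rightarrow> (int \<Rightarrow> nat \<Rightarrow> int) \<Rightarrow> (int \<Rightarrow> nat \<Rightarrow> int) \<Rightarrow> int \<Rightarrow> nat \<Rightarrow> int" where
  "add_mod p a b i j = (a i j + b i j) mod int p"

definition diff_mod :: "nat \<Rightarrow> (int \<Rightarrow> nat \<Rightarrow> int) \<Rightarrow> (int \<Rightarrow> nat \<Rightarrow> int) \<Rightarrow> int \<Rightarrow> nat \<Rightarrow> int" where
  "diff_mod p a b i j = (a i j - b i j) mod int p"

definition shift_invariant :: "nat \<Rightarrow> nat \<Rightarrow> int \<Rightarrow> (int \<Rightarrow> nat \<Rightarrow> int) set \<Rightarrow> bool" where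
  "shift_invariant n p s W \<longleftrightarrow> (\<forall>w\<in>W. (w, 0) \<in> Lcarrier n p)
     \<and> (\<forall>a\<in>W. \<forall>b\<in>W. add_mod p a b \<in> W \<and> diff_mod p a b \<in> W)
     \<and> (\<forall>a\<in>W. shift_by s a \<in> W \<and> shift_by (- s) a \<in> W)"

definition window :: "(int \<Rightarrow> nat \<Rightarrow> int) set \<Rightarrow> nat \<Rightarrow> (int \<Rightarrow> nat \<Rightarrow> int) set" where
  "window W k = {w \<in> W. \<forall>i j. w i j \<noteq> 0 \<longrightarrow> 0 \<le> i \<and> i \<le> int k}"

definition top_coeffs :: "(int \<Rightarrow> nat \<Rightarrow> int) set \<Rightarrow> nat \<Rightarrow> (nat \<Rightarrow> int) set" where
  "top_coeffs W k = (\<lambda>w. w (int k)) ` window W k"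

definition top_coeffs_stable :: "int \<Rightarrow> (int \<Rightarrow> nat \<Rightarrow> int) set \<Rightarrow> nat \<Rightarrow> bool" where
  "top_coeffs_stable s W N \<longleftrightarrow> nat s \<le> N \<and> (\<forall>k\<ge>N. top_coeffs W k \<subseteq> top_coeffs W (k - nat s))"

definition row_vectors :: "nat \<Rightarrow> nat \<Rightarrow> (nat \<Rightarrow> int) set" where
  "row_vectors n p = {v. \<forall>j. (j \<in> {..<n} \<longrightarrow> v j \<in> {0..<int p}) \<and> (j \<notin> {..<n} \<longrightarrow> v j = 0)}"

definition window_vectors :: "nat \<Rightarrow> nat \<Rightarrow> nat \<Rightarrow> (int \<Rightarrow> nat \<Rightarrow> int) set" where
  "window_vectors n p k =
     {w. \<forall>i. (i \<in> {0..int k} \<longrightarrow> w i \<in> row_vectors n p) \<and> (i \<notin> {0..int k} \<longrightarrow> w i = (\<lambda>_. 0))}"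

lemma shift_by_shift_by [simp]: "shift_by a (shift_by b w) = shift_by (a + b) w"
  by (simp add: shift_by_def fun_eq_iff algebra_simps)

lemma shift_by_0 [simp]: "shift_by 0 w = w"
  by (simp add: shift_by_def fun_eq_iff)

lemma finite_row_vectors: "finite (row_vectors n p)"
  unfolding row_vectors_def by (rule finite_set_of_finite_funs) auto

lemma finite_window_vectors: "finite (window_vectors n p k)"
  unfolding window_vectors_def by (rule finite_set_of_finite_funs[OF _ finite_row_vectors]) auto

lemma window_subset_window_vectors:
  assumes "shift_invariant n p s W" shows "window W k \<subseteq> window_vectors n p k"
proof
  fix w assume w: "w \<in> window W k"
  hence "(w, 0) \<in> Lcarrier n p" using assms by (simp add: shift_invariant_def window_def)
  hence "w i \<in> row_vectors n p" for i
    by (simp add: row_vectors_def mem_Lcarrier_iff not_less)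
  moreover have "w i = (\<lambda>_. 0)" if "i \<notin> {0..int k}" for i
  proof (rule ext, rule ccontr)
    fix j assume "w i j \<noteq> 0"
    thus False using w that by (auto simp: window_def)
  qed
  ultimately show "w \<in> window_vectors n p k" by (simp add: window_vectors_def)
qed

lemma top_coeffs_subset_row_vectors: "shift_invariant n p s W \<Longrightarrow> top_coeffs W k \<subseteq> row_vectors n p"
  using window_subset_window_vectors by (force simp: top_coeffs_def window_vectors_def)

lemma finite_top_coeffs: "shift_invariant n p s W \<Longrightarrow> finite (top_coeffs W k)"
  by (rule finite_subset[OF top_coeffs_subset_row_vectors finite_row_vectors])

lemma window_mono: "k \<le> k' \<Longrightarrow> window W k \<subseteq> window W k'"
  by (force simp: window_def)

lemma shift_in_window:
  assumes "shift_invariant n p s W" "0 < s" "w \<in> window W k"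
  shows "shift_by s w \<in> window W (k + nat s)"
  using assms by (force simp: window_def shift_invariant_def shift_by_def)

lemma top_coeffs_subset_shift:
  assumes "shift_invariant n p s W" "0 < s"
  shows "top_coeffs W k \<subseteq> top_coeffs W (k + nat s)"
proof
  fix v assume "v \<in> top_coeffs W k"
  then obtain w where w: "w \<in> window W k" "v = w (int k)" by (auto simp: top_coeffs_def)
  have "shift_by s w (int (k + nat s)) = v" using w(2) assms(2) by (simp add: shift_by_def)
  thus "v \<in> top_coeffs W (k + nat s)"
    unfolding top_coeffs_def using shift_in_window[OF assms w(1)] by (metis image_eqI)
qed

lemma mono_bounded_nat_eventually_const:
  fixes f :: "nat \<Rightarrow> nat"
  assumes "\<And>k. f k \<le> f (Suc k)" "\<And>k. f k \<le> B"
  shows "\<exists>K. \<forall>k\<ge>K. f k = f K"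
proof -
  have fin: "finite (range f)" using assms(2) by (meson finite_atMost finite_subset image_subsetI atMost_iff)
  hence "Max (range f) \<in> range f" by (intro Max_in) auto
  then obtain K where K: "f K = Max (range f)" by auto
  have "f K \<le> f k" if "K \<le> k" for k using assms(1) that by (rule lift_Suc_mono_le)
  moreover have "f k \<le> f K" for k unfolding K using fin by (intro Max_ge) auto
  ultimately show ?thesis using antisym by blast
qed

lemma top_coeffs_stable_exists:
  assumes W: "shift_invariant n p s W" and s: "0 < s"
  shows "\<exists>N. top_coeffs_stable s W N"
proof -
  define d where "d = nat s"
  \<comment> \<open>The sets of top coefficients grow along each residue class mod \<open>s\<close> inside a finite set,
    so their total size over a period is nondecreasing and bounded, hence eventually constant.\<close>
  define \<Phi> where "\<Phi> k = (\<Sum>r<d. card (top_coeffs W (k + r)))" for k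
  have card_le: "card (top_coeffs W k) \<le> card (top_coeffs W (k + d))" for k
    unfolding d_def by (rule card_mono[OF finite_top_coeffs[OF W] top_coeffs_subset_shift[OF W s]])
  have \<Phi>_Suc: "\<Phi> (Suc k) + card (top_coeffs W k) = \<Phi> k + card (top_coeffs W (k + d))" for k
  proof -
    have "\<Phi> (Suc k) + card (top_coeffs W k) = (\<Sum>r<Suc d. card (top_coeffs W (k + r)))"
      unfolding \<Phi>_def by (subst sum.lessThan_Suc_shift) simp
    also have "\<dots> = \<Phi> k + card (top_coeffs W (k + d))" unfolding \<Phi>_def by simp
    finally show ?thesis .
  qed
  have "\<Phi> k \<le> \<Phi> (Suc k)" for k using \<Phi>_Suc[of k] card_le[of k] by linarith
  moreover have "\<Phi> k \<le> d * card (row_vectors n p)" for k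
    using sum_bounded_above[of "{..<d}" "\<lambda>r. card (top_coeffs W (k + r))" "card (row_vectors n p)"]
      card_mono[OF finite_row_vectors top_coeffs_subset_row_vectors[OF W]]
    unfolding \<Phi>_def by simp
  ultimately obtain K where K: "\<forall>k\<ge>K. \<Phi> k = \<Phi> K" using mono_bounded_nat_eventually_const by blast
  have "top_coeffs_stable s W (K + d)"
    unfolding top_coeffs_stable_def
  proof (intro conjI allI impI)
    fix k assume k: "K + d \<le> k"
    define k' where "k' = k - d"
    have k': "k = k' + d" "K \<le> k'" using k by (simp_all add: k'_def)
    have "\<Phi> (Suc k') = \<Phi> k'" using K k'(2) le_SucI by metis
    hence "card (top_coeffs W k') = card (top_coeffs W (k' + d))" using \<Phi>_Suc[of k'] by linarith
    hence "top_coeffs W k' = top_coeffs W (k' + d)"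
      using top_coeffs_subset_shift[OF W s] finite_top_coeffs[OF W] unfolding d_def
      by (intro card_subset_eq) auto
    thus "top_coeffs W k \<subseteq> top_coeffs W (k - nat s)" using k' unfolding d_def by simp
  qed (simp add: d_def)
  thus ?thesis by blast
qed

lemma shift_multiple_closed:
  assumes "shift_invariant n p s W" "a \<in> W"
  shows "shift_by (s * m) a \<in> W"
proof (induction m rule: int_induct[where k = 0])
  case (step1 i)
  have "shift_by s (shift_by (s * i) a) \<in> W" using step1 assms(1) by (simp only: shift_invariant_def)
  thus ?case by (simp add: algebra_simps)
next
  case (step2 i)
  have "shift_by (- s) (shift_by (s * i) a) \<in> W" using step2 assms(1) by (simp only: shift_invariant_def)
  thus ?case by (simp add: algebra_simps)
qed (simp add: assms(2))

lemma add_mod_diff_mod: "(a, 0) \<in> Lcarrier n p \<Longrightarrow> add_mod p (diff_mod p a b) b = a"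
  by (simp add: add_mod_def diff_mod_def mem_Lcarrier_iff mod_add_left_eq fun_eq_iff)

lemma diff_shift_in_window:
  assumes W: "shift_invariant n p s W" and s: "0 < s" and k: "nat s \<le> k"
    and w: "w \<in> window W k" and v: "v \<in> window W (k - nat s)" and top: "v (int k - s) = w (int k)"
  shows "diff_mod p w (shift_by s v) \<in> window W (k - 1)"
proof -
  have "diff_mod p w (shift_by s v) \<in> W"
    using W w v by (simp add: shift_invariant_def window_def)
  moreover have "0 \<le> i \<and> i \<le> int (k - 1)" if nonzero: "diff_mod p w (shift_by s v) i j \<noteq> 0" for i j
  proof -
    have "w i j \<noteq> 0 \<or> v (i - s) j \<noteq> 0" using nonzero by (auto simp: diff_mod_def shift_by_def)
    hence "0 \<le> i \<and> i \<le> int k" using w v s k by (auto simp: window_def)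
    moreover have "i \<noteq> int k" using nonzero top by (auto simp: diff_mod_def shift_by_def)
    ultimately show ?thesis using s k by linarith
  qed
  ultimately show ?thesis by (auto simp: window_def)
qed

lemma window_subset_if_window_eq:
  assumes W1: "shift_invariant n p s W1" and W2: "shift_invariant n p s W2" and s: "0 < s"
    and stable: "top_coeffs_stable s W1 N" and eq: "window W1 N = window W2 N"
  shows "window W1 k \<subseteq> W2"
proof (induction k rule: less_induct)
  case (less k)
  show ?case
  proof
    fix w assume w: "w \<in> window W1 k"
    show "w \<in> W2"
    proof (cases "k \<le> N")
      case True
      thus ?thesis using w window_mono[OF True, of W1] eq by (auto simp: window_def)
    next
      case False
      \<comment> \<open>Cancel the top coefficient of \<open>w\<close> by a shifted element of a smaller window.\<close>
      have k: "nat s \<le> k" using stable False by (simp add: top_coeffs_stable_def)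
      have "w (int k) \<in> top_coeffs W1 k" using w by (simp add: top_coeffs_def)
      also have "\<dots> \<subseteq> top_coeffs W1 (k - nat s)" using stable False by (simp add: top_coeffs_stable_def)
      finally have "w (int k) \<in> top_coeffs W1 (k - nat s)" .
      then obtain v where v: "v \<in> window W1 (k - nat s)" "v (int k - s) = w (int k)"
        using k s by (auto simp: top_coeffs_def of_nat_diff)
      have "v \<in> W2" using less.IH[of "k - nat s"] v(1) s k by auto
      hence shift_v: "shift_by s v \<in> W2" using W2 by (simp add: shift_invariant_def)
      have "diff_mod p w (shift_by s v) \<in> W2"
        using less.IH[of "k - 1"] diff_shift_in_window[OF W1 s k w v] s k by auto
      hence "add_mod p (diff_mod p w (shift_by s v)) (shift_by s v) \<in> W2"
        using shift_v W2 by (simp add: shift_invariant_def)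
      moreover have "(w, 0) \<in> Lcarrier n p" using W1 w by (simp add: shift_invariant_def window_def)
      ultimately show ?thesis by (simp add: add_mod_diff_mod)
    qed
  qed
qed

lemma shift_into_window:
  assumes W: "shift_invariant n p s W" and s: "0 < s" and w: "w \<in> W"
  shows "\<exists>m k. shift_by (s * m) w \<in> window W k"
proof -
  have "finite {i. \<exists>j. w i j \<noteq> 0}" using W w by (auto simp: shift_invariant_def mem_Lcarrier_iff)
  then obtain B where B: "\<And>i j. w i j \<noteq> 0 \<Longrightarrow> \<bar>i\<bar> \<le> B"
    by (force simp: finite_int_iff_bounded_le)
  have "shift_by (s * B) w \<in> window W (nat (B + s * B))"
    unfolding window_def
  proof (intro CollectI conjI allI impI)
    show "shift_by (s * B) w \<in> W" using shift_multiple_closed[OF W w] .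
  next
    fix i j assume "shift_by (s * B) w i j \<noteq> 0"
    hence bound: "\<bar>i - s * B\<bar> \<le> B" using B by (simp add: shift_by_def)
    hence "0 \<le> B" by linarith
    hence "B \<le> s * B" using s by (simp add: mult_le_cancel_right1)
    thus "0 \<le> i" "i \<le> int (nat (B + s * B))" using bound by linarith+
  qed
  thus ?thesis by blast
qed

lemma shift_invariant_subset_if_window_eq:
  assumes W1: "shift_invariant n p s W1" and W2: "shift_invariant n p s W2" and s: "0 < s"
    and stable: "top_coeffs_stable s W1 N" and eq: "window W1 N = window W2 N"
  shows "W1 \<subseteq> W2"
proof
  fix w assume "w \<in> W1"
  then obtain m k where "shift_by (s * m) w \<in> window W1 k" using shift_into_window[OF W1 s] by blast
  hence "shift_by (s * m) w \<in> W2" using window_subset_if_window_eq[OF assms] by blast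
  hence "shift_by (s * - m) (shift_by (s * m) w) \<in> W2" by (rule shift_multiple_closed[OF W2])
  thus "w \<in> W2" by simp
qed

lemma countable_shift_invariant:
  assumes s: "0 < s"
  shows "countable {W. shift_invariant n p s W}"
proof -
  define N where "N W = (SOME N. top_coeffs_stable s W N)" for W
  have stable: "top_coeffs_stable s W (N W)" if "shift_invariant n p s W" for W
    unfolding N_def using top_coeffs_stable_exists[OF that s] by (rule someI_ex)
  define code where "code W = (N W, window W (N W))" for W
  have "inj_on code {W. shift_invariant n p s W}"
  proof (rule inj_onI)
    fix W1 W2 assume "W1 \<in> {W. shift_invariant n p s W}" "W2 \<in> {W. shift_invariant n p s W}"
      and "code W1 = code W2"
    thus "W1 = W2"
      using shift_invariant_subset_if_window_eq[OF _ _ s stable] by (metis code_def mem_Collect_eq prod.inject subset_antisym)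
  qed
  moreover have "code ` {W. shift_invariant n p s W} \<subseteq> Sigma UNIV (\<lambda>N. Pow (window_vectors n p N))"
    by (auto simp: code_def intro: window_subset_window_vectors[THEN subsetD])
  moreover have "countable (Sigma (UNIV :: nat set) (\<lambda>N. Pow (window_vectors n p N)))"
    by (intro countable_SIGMA countableI_type countable_finite) (simp add: finite_window_vectors)
  ultimately show ?thesis by (metis countable_image_inj_on countable_subset)
qed

section \<open>The fibres of \<open>\<pi>\<^sub>1\<close>\<close>

definition base_part :: "((int \<Rightarrow> nat \<Rightarrow> int) \<times> int) set \<Rightarrow> (int \<Rightarrow> nat \<Rightarrow> int) set" where
  "base_part V = {w. (w, 0) \<in> V}"

lemma Lcarrier_shift_by: "(a, 0) \<in> Lcarrier n p \<Longrightarrow> (shift_by m a, 0) \<in> Lcarrier n p"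
  using finite_support_shift[of a m] by (simp add: mem_Lcarrier_iff shift_by_def)

lemma Lgrp_mult_base: "(a, 0) \<otimes>\<^bsub>Lgrp n p\<^esub> (b, 0) = (add_mod p a b, 0)"
  by (simp add: Lgrp_mult add_mod_def fun_eq_iff)

lemma Lgrp_mult_inv_base:
  "0 < p \<Longrightarrow> (b, 0) \<in> Lcarrier n p \<Longrightarrow> (a, 0) \<otimes>\<^bsub>Lgrp n p\<^esub> inv\<^bsub>Lgrp n p\<^esub> (b, 0) = (diff_mod p a b, 0)"
  by (simp add: Lgrp_inv Lgrp_mult diff_mod_def fun_eq_iff mod_add_right_eq)

lemma Lgrp_conj_base:
  assumes p: "0 < p" and f: "(f, s) \<in> Lcarrier n p" and a: "(a, 0) \<in> Lcarrier n p"
  shows "(f, s) \<otimes>\<^bsub>Lgrp n p\<^esub> (a, 0) \<otimes>\<^bsub>Lgrp n p\<^esub> inv\<^bsub>Lgrp n p\<^esub> (f, s) = (shift_by s a, 0)"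
    and "inv\<^bsub>Lgrp n p\<^esub> (f, s) \<otimes>\<^bsub>Lgrp n p\<^esub> (a, 0) \<otimes>\<^bsub>Lgrp n p\<^esub> (f, s) = (shift_by (- s) a, 0)"
proof -
  interpret group "Lgrp n p" by (rule group_Lgrp) fact
  have "(f, s) \<otimes>\<^bsub>Lgrp n p\<^esub> (a, 0) = (shift_by s a, 0) \<otimes>\<^bsub>Lgrp n p\<^esub> (f, s)"
    by (simp add: Lgrp_mult shift_by_def add.commute)
  hence "(f, s) \<otimes>\<^bsub>Lgrp n p\<^esub> (a, 0) \<otimes>\<^bsub>Lgrp n p\<^esub> inv\<^bsub>Lgrp n p\<^esub> (f, s)
      = (shift_by s a, 0) \<otimes>\<^bsub>Lgrp n p\<^esub> ((f, s) \<otimes>\<^bsub>Lgrp n p\<^esub> inv\<^bsub>Lgrp n p\<^esub> (f, s))"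
    using f Lcarrier_shift_by[OF a] by (simp add: m_assoc Lgrp_inv_closed[OF p])
  thus "(f, s) \<otimes>\<^bsub>Lgrp n p\<^esub> (a, 0) \<otimes>\<^bsub>Lgrp n p\<^esub> inv\<^bsub>Lgrp n p\<^esub> (f, s) = (shift_by s a, 0)"
    using f Lcarrier_shift_by[OF a] by simp
  have "(a, 0) \<otimes>\<^bsub>Lgrp n p\<^esub> (f, s) = (f, s) \<otimes>\<^bsub>Lgrp n p\<^esub> (shift_by (- s) a, 0)"
    by (simp add: Lgrp_mult shift_by_def add.commute)
  hence "inv\<^bsub>Lgrp n p\<^esub> (f, s) \<otimes>\<^bsub>Lgrp n p\<^esub> (a, 0) \<otimes>\<^bsub>Lgrp n p\<^esub> (f, s)
      = inv\<^bsub>Lgrp n p\<^esub> (f, s) \<otimes>\<^bsub>Lgrp n p\<^esub> ((f, s) \<otimes>\<^bsub>Lgrp n p\<^esub> (shift_by (- s) a, 0))"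
    using a f by (simp add: m_assoc Lgrp_inv_closed[OF p])
  thus "inv\<^bsub>Lgrp n p\<^esub> (f, s) \<otimes>\<^bsub>Lgrp n p\<^esub> (a, 0) \<otimes>\<^bsub>Lgrp n p\<^esub> (f, s) = (shift_by (- s) a, 0)"
    using f Lcarrier_shift_by[OF a] by (simp add: inv_mult_cancel_left)
qed

lemma shift_invariant_base_part:
  assumes p: "0 < p" and V: "V \<in> SubL n p" and f: "(f, s) \<in> V"
  shows "shift_invariant n p s (base_part V)"
proof -
  have sub: "subgroup V (Lgrp n p)" using V by (simp add: SubL_def)
  have VL: "V \<subseteq> Lcarrier n p" using SubL_subset_Lcarrier[OF V] .
  have mult: "x \<otimes>\<^bsub>Lgrp n p\<^esub> y \<in> V" if "x \<in> V" "y \<in> V" for x y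
    using sub that by (rule subgroup.m_closed)
  have inv: "inv\<^bsub>Lgrp n p\<^esub> x \<in> V" if "x \<in> V" for x
    using sub that by (rule subgroup.m_inv_closed)
  have "(add_mod p a b, 0) \<in> V \<and> (diff_mod p a b, 0) \<in> V" if a: "(a, 0) \<in> V" and b: "(b, 0) \<in> V" for a b
    unfolding Lgrp_mult_base[where n = n, symmetric] Lgrp_mult_inv_base[OF p subsetD[OF VL b], symmetric]
    by (intro conjI mult inv a b)
  moreover have "(shift_by s a, 0) \<in> V \<and> (shift_by (- s) a, 0) \<in> V" if a: "(a, 0) \<in> V" for a
    unfolding Lgrp_conj_base[OF p subsetD[OF VL f] subsetD[OF VL a], symmetric]
    by (intro conjI mult inv a f)
  ultimately show ?thesis
    using VL unfolding shift_invariant_def base_part_def by blast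
qed

lemma (in group_hom) subgroup_subset_if_kernel_part_subset:
  assumes V1: "subgroup V1 G" and V2: "subgroup V2 G" and g: "g \<in> V1" "g \<in> V2"
    and kernel: "\<And>x. x \<in> V1 \<Longrightarrow> h x = \<one>\<^bsub>H\<^esub> \<Longrightarrow> x \<in> V2"
    and powers: "\<And>x. x \<in> V1 \<Longrightarrow> \<exists>m::int. h x = h (g [^] m)"
  shows "V1 \<subseteq> V2"
proof
  fix x assume x: "x \<in> V1"
  obtain m :: int where m: "h x = h (g [^] m)" using powers[OF x] ..
  have xG: "x \<in> carrier G" and gG: "g \<in> carrier G" using x g V1 subgroup.subset by blast+
  have gm: "g [^] m \<in> V1" "g [^] m \<in> V2" using g V1 V2 by (simp_all add: G.subgroup_int_pow_closed)
  have "x \<otimes> inv (g [^] m) \<in> V2"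
  proof (rule kernel)
    show "x \<otimes> inv (g [^] m) \<in> V1" using x gm(1) V1 by (simp add: subgroup.m_closed subgroup.m_inv_closed)
    show "h (x \<otimes> inv (g [^] m)) = \<one>\<^bsub>H\<^esub>" using xG gG m by simp
  qed
  hence "x \<otimes> inv (g [^] m) \<otimes> g [^] m \<in> V2" using gm(2) V2 by (simp add: subgroup.m_closed)
  thus "x \<in> V2" using xG gG by (simp add: G.m_assoc)
qed

lemma pi1_fiber_subset_if_base_part_subset:
  assumes "0 < p" and V1: "V1 \<in> pi1_fiber n p s" and V2: "V2 \<in> SubL n p"
    and f: "(f, s) \<in> V1" "(f, s) \<in> V2" and base: "base_part V1 \<subseteq> base_part V2"
  shows "V1 \<subseteq> V2"
proof -
  interpret group_hom "Lgrp n p" integer_group snd by (rule group_hom_snd) fact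
  have fL: "(f, s) \<in> Lcarrier n p" using f V2 SubL_subset_Lcarrier by blast
  show ?thesis
  proof (rule subgroup_subset_if_kernel_part_subset[OF _ _ f])
    show "subgroup V1 (Lgrp n p)" "subgroup V2 (Lgrp n p)" using V1 V2 by (simp_all add: pi1_fiber_def SubL_def)
  next
    fix x assume "x \<in> V1" "snd x = \<one>\<^bsub>integer_group\<^esub>"
    thus "x \<in> V2" using base by (cases x) (auto simp: base_part_def)
  next
    fix x assume "x \<in> V1"
    then obtain m where "snd x = s * m" using V1 by (force simp: pi1_fiber_def)
    moreover have "snd ((f, s) [^]\<^bsub>Lgrp n p\<^esub> m) = m * s" using fL by (simp add: hom_int_pow)
    ultimately show "\<exists>m::int. snd x = snd ((f, s) [^]\<^bsub>Lgrp n p\<^esub> m)" by (metis mult.commute)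
  qed
qed

lemma countable_pi1_fiber:
  assumes p: "0 < p" and s: "0 < s"
  shows "countable (pi1_fiber n p s)"
proof -
  define lift where "lift V = (SOME f. (f, s) \<in> V)" for V :: "((int \<Rightarrow> nat \<Rightarrow> int) \<times> int) set"
  have lift: "(lift V, s) \<in> V" if "V \<in> pi1_fiber n p s" for V
  proof -
    have "s \<in> snd ` V" using that by (auto simp: pi1_fiber_def image_iff intro: exI[of _ 1])
    then obtain f where "(f, s) \<in> V" by auto
    thus ?thesis unfolding lift_def by (rule someI[where P = "\<lambda>f. (f, s) \<in> V"])
  qed
  define code where "code V = (base_part V, lift V)" for V
  have "inj_on code (pi1_fiber n p s)"
  proof (rule inj_onI)
    fix V1 V2 assume V: "V1 \<in> pi1_fiber n p s" "V2 \<in> pi1_fiber n p s" and "code V1 = code V2"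
    hence eq: "base_part V1 = base_part V2" "lift V1 = lift V2" by (simp_all add: code_def)
    have S: "V1 \<in> SubL n p" "V2 \<in> SubL n p" using V by (simp_all add: pi1_fiber_def)
    have "V1 \<subseteq> V2"
      using lift[OF V(2)] eq by (intro pi1_fiber_subset_if_base_part_subset[OF p V(1) S(2) lift[OF V(1)]]) simp_all
    moreover have "V2 \<subseteq> V1"
      using lift[OF V(1)] eq by (intro pi1_fiber_subset_if_base_part_subset[OF p V(2) S(1) lift[OF V(2)]]) simp_all
    ultimately show "V1 = V2" ..
  qed
  moreover have "code V \<in> {W. shift_invariant n p s W} \<times> fst ` Lcarrier n p" if V: "V \<in> pi1_fiber n p s" for V
  proof -
    have S: "V \<in> SubL n p" using V by (simp add: pi1_fiber_def)
    have "(lift V, s) \<in> Lcarrier n p" using lift[OF V] SubL_subset_Lcarrier[OF S] by blast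
    hence "lift V \<in> fst ` Lcarrier n p" by (rule image_eqI[rotated]) simp
    thus ?thesis using shift_invariant_base_part[OF p S lift[OF V]] by (simp add: code_def)
  qed
  hence "code ` pi1_fiber n p s \<subseteq> {W. shift_invariant n p s W} \<times> fst ` Lcarrier n p" by blast
  moreover have "countable ({W. shift_invariant n p s W} \<times> fst ` Lcarrier n p)"
    using countable_shift_invariant[OF s] countable_Lcarrier by (intro countable_SIGMA countable_image) auto
  ultimately show ?thesis by (metis countable_image_inj_on countable_subset)
qed

section \<open>Equidistributed measures\<close>

definition equidistributed_on :: "'a measure \<Rightarrow> 'a set \<Rightarrow> bool" where
  "equidistributed_on M C \<longleftrightarrow> finite C \<and> C \<in> sets M \<and> emeasure M C = 1
     \<and> (\<exists>c. \<forall>x\<in>C. {x} \<in> sets M \<and> emeasure M {x} = c)"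

lemma countable_exists_positive_atom:
  assumes "countable C" "\<And>x. x \<in> C \<Longrightarrow> {x} \<in> sets M" "emeasure M C \<noteq> 0"
  shows "\<exists>x\<in>C. emeasure M {x} \<noteq> 0"
proof (rule ccontr)
  assume no_atom: "\<not> ?thesis"
  have "emeasure M C = (\<integral>\<^sup>+x. emeasure M {x} \<partial>count_space C)"
    by (rule emeasure_countable_singleton[OF assms(2,1)])
  also have "\<dots> = (\<integral>\<^sup>+x. 0 \<partial>count_space C)"
    using no_atom by (intro nn_integral_cong) auto
  finally show False using assms(3) by simp
qed

lemma (in prob_space) finite_if_equal_positive_atoms:
  assumes "\<And>x. x \<in> C \<Longrightarrow> {x} \<in> events" "\<And>x. x \<in> C \<Longrightarrow> prob {x} = c" "0 < c"
  shows "finite C"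
proof (rule ccontr)
  assume "infinite C"
  then obtain D where D: "finite D" "card D = nat \<lceil>2 / c\<rceil>" "D \<subseteq> C"
    using infinite_arbitrarily_large by blast
  have "prob D = (\<Sum>x\<in>D. prob {x})"
    using D assms(1) by (intro finite_measure_eq_sum_singleton) auto
  also have "\<dots> = card D * c" using D(3) assms(2) by (simp add: subset_eq)
  finally have "card D * c \<le> 1" using prob_le_1[of D] by simp
  moreover have "2 / c * c \<le> card D * c"
    using D(2) assms(3) real_nat_ceiling_ge by (intro mult_right_mono) auto
  ultimately show False using assms(3) by simp
qed

lemma (in prob_space) measure_equidistributed:
  assumes C: "equidistributed_on M C" and A: "A \<in> events"
  shows "prob A = card (A \<inter> C) / card C"
proof -
  obtain c where fin: "finite C" and C_ev: "C \<in> events" and C_one: "emeasure M C = 1"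
    and atom: "\<And>x. x \<in> C \<Longrightarrow> {x} \<in> events \<and> emeasure M {x} = c"
    using C unfolding equidistributed_on_def by blast
  have prob_C: "prob C = 1" using C_one by (simp add: emeasure_eq_measure)
  have prob_sub: "prob B = card B * enn2real c" if "B \<subseteq> C" for B
  proof -
    have "prob B = (\<Sum>x\<in>B. prob {x})"
      using finite_subset[OF that fin] that atom by (intro finite_measure_eq_sum_singleton) auto
    also have "\<dots> = (\<Sum>x\<in>B. enn2real c)"
      using that atom by (intro sum.cong) (auto simp: measure_def)
    finally show ?thesis by simp
  qed
  have card_C: "card C * enn2real c = 1" using prob_sub[of C] prob_C by simp
  hence "card C \<noteq> 0" by (metis mult_zero_left of_nat_0 zero_neq_one)
  with card_C have c: "enn2real c = 1 / card C" by (simp add: field_simps)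
  have "prob (A - C) \<le> prob (space M - C)"
    using A C_ev sets.sets_into_space[OF A] by (intro finite_measure_mono) auto
  also have "\<dots> = 0" using prob_compl[OF C_ev] prob_C by simp
  finally have "prob (A - C) = 0" using measure_nonneg[of M "A - C"] by linarith
  have "prob A = prob (A \<inter> C \<union> (A - C))" by (simp add: Int_Diff_Un)
  also have "\<dots> = prob (A \<inter> C) + prob (A - C)"
    using A C_ev by (intro finite_measure_Union) auto
  also have "\<dots> = card (A \<inter> C) * enn2real c" using \<open>prob (A - C) = 0\<close> prob_sub[of "A \<inter> C"] by simp
  finally show ?thesis by (simp add: c)
qed

lemma equidistributed_measure_unique:
  assumes "prob_space M" "prob_space N" "sets M = sets N"
    and "equidistributed_on M C" "equidistributed_on N C"
  shows "M = N"
proof (rule measure_eqI)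
  fix A assume "A \<in> sets M"
  hence "measure M A = measure N A"
    using prob_space.measure_equidistributed[OF assms(1,4)] prob_space.measure_equidistributed[OF assms(2,5)]
      assms(3) by simp
  thus "emeasure M A = emeasure N A"
    using assms(1,2) by (simp add: finite_measure.emeasure_eq_measure prob_space.finite_measure)
qed (fact assms(3))

lemma countable_equidistributed_measures:
  assumes T: "countable T"
    and prob: "\<And>M. M \<in> S \<Longrightarrow> prob_space M" and same_sets: "\<And>M. M \<in> S \<Longrightarrow> sets M = \<Sigma>"
    and equi: "\<And>M. M \<in> S \<Longrightarrow> \<exists>C \<subseteq> T. equidistributed_on M C"
  shows "countable S"
proof -
  define supp where "supp M = (SOME C. C \<subseteq> T \<and> equidistributed_on M C)" for M
  have supp: "supp M \<subseteq> T \<and> equidistributed_on M (supp M)" if "M \<in> S" for M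
  proof -
    have "\<exists>C. C \<subseteq> T \<and> equidistributed_on M C" using equi[OF that] by blast
    thus ?thesis unfolding supp_def by (rule someI_ex)
  qed
  have "inj_on supp S"
  proof (rule inj_onI)
    fix M N assume M: "M \<in> S" and N: "N \<in> S" and eq: "supp M = supp N"
    show "M = N"
    proof (rule equidistributed_measure_unique)
      show "prob_space M" "prob_space N" "sets M = sets N" using prob M N same_sets by simp_all
      show "equidistributed_on M (supp M)" "equidistributed_on N (supp M)"
        using supp[OF M] supp[OF N] eq by simp_all
    qed
  qed
  moreover have "supp M \<in> {C. finite C \<and> C \<subseteq> T}" if "M \<in> S" for M
    using supp[OF that] by (simp add: equidistributed_on_def)
  hence "supp ` S \<subseteq> {C. finite C \<and> C \<subseteq> T}" by blast
  ultimately show ?thesis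
    using countable_Collect_finite_subset[OF T] by (metis countable_image_inj_on countable_subset)
qed

section \<open>Ergodic measures on a fibre\<close>

lemma conjL_eq_conjL_iff:
  assumes "0 < p" "V \<subseteq> Lcarrier n p" "W \<subseteq> Lcarrier n p" "g \<in> Lcarrier n p"
  shows "conjL n p g V = conjL n p g W \<longleftrightarrow> V = W"
  by (metis conjL_inv_conjL[OF assms(1,2,4)] conjL_inv_conjL[OF assms(1,3,4)])

lemma emeasure_conj_class_singleton:
  assumes p: "0 < p" and \<mu>: "borel_prob_Sub n p \<mu>" "conj_invariant n p \<mu>"
    and H: "H \<in> SubL n p" and V: "V \<in> conj_class n p H"
  shows "emeasure \<mu> {V} = emeasure \<mu> {H}"
proof -
  obtain g where g: "g \<in> Lcarrier n p" "V = conjL n p g H" using V by (auto simp: conj_class_def)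
  have "conjL n p g -` {V} \<inter> space \<mu> = {H}"
  proof
    show "{H} \<subseteq> conjL n p g -` {V} \<inter> space \<mu>" using g H by (simp add: space_borel_prob_Sub[OF \<mu>(1)])
    show "conjL n p g -` {V} \<inter> space \<mu> \<subseteq> {H}"
    proof
      fix W assume "W \<in> conjL n p g -` {V} \<inter> space \<mu>"
      hence W: "W \<in> SubL n p" "conjL n p g W = conjL n p g H"
        using g by (simp_all add: space_borel_prob_Sub[OF \<mu>(1)])
      thus "W \<in> {H}"
        using conjL_eq_conjL_iff[OF p SubL_subset_Lcarrier[OF W(1)] SubL_subset_Lcarrier[OF H] g(1)] by simp
    qed
  qed
  moreover have "{V} \<in> sets \<mu>"
    using singleton_in_sets_borel_prob_Sub[OF \<mu>(1)] conjL_in_SubL[OF p H g(1)] g(2) by simp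
  hence "emeasure \<mu> (conjL n p g -` {V} \<inter> space \<mu>) = emeasure \<mu> {V}"
    using \<mu>(2) g(1) by (simp add: conj_invariant_def)
  ultimately show ?thesis by simp
qed

lemma ergodic_measure_equidistributed_on_conj_class:
  assumes p: "0 < p" and s: "0 < s"
    and \<mu>: "borel_prob_Sub n p \<mu>" "conj_invariant n p \<mu>" "conj_ergodic n p \<mu>"
    and fiber: "emeasure \<mu> (pi1_fiber n p s) = 1"
  shows "\<exists>H\<in>pi1_fiber n p s. equidistributed_on \<mu> (conj_class n p H)"
proof -
  interpret prob_space \<mu> using \<mu>(1) by (simp add: borel_prob_Sub_def)
  have sing: "{V} \<in> sets \<mu>" if "V \<in> SubL n p" for V
    using singleton_in_sets_borel_prob_Sub[OF \<mu>(1) that] .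
  have "\<exists>H\<in>pi1_fiber n p s. emeasure \<mu> {H} \<noteq> 0"
    using sing fiber by (intro countable_exists_positive_atom[OF countable_pi1_fiber[OF p s]]) (auto simp: pi1_fiber_def)
  then obtain H where H: "H \<in> pi1_fiber n p s" "emeasure \<mu> {H} \<noteq> 0" ..
  have HS: "H \<in> SubL n p" using H(1) by (simp add: pi1_fiber_def)
  let ?C = "conj_class n p H"
  have CS: "?C \<subseteq> SubL n p" using conjL_in_SubL[OF p HS] by (auto simp: conj_class_def)
  have atoms: "emeasure \<mu> {V} = emeasure \<mu> {H}" if "V \<in> ?C" for V
    using emeasure_conj_class_singleton[OF p \<mu>(1,2) HS that] .
  have fin: "finite ?C"
  proof (rule finite_if_equal_positive_atoms)
    show "{V} \<in> events" if "V \<in> ?C" for V using sing CS that by blast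
    show "prob {V} = prob {H}" if "V \<in> ?C" for V using atoms[OF that] by (simp add: measure_def)
    show "0 < prob {H}" using H(2) by (simp add: emeasure_eq_measure zero_less_measure_iff)
  qed
  have C_ev: "?C \<in> events"
    using sing CS by (intro sets.countable[OF _ countable_finite[OF fin]]) blast
  have "emeasure \<mu> ?C = 0 \<or> emeasure \<mu> ?C = 1"
    using \<mu>(3) C_ev conjL_vimage_conj_class[OF p HS]
    by (simp add: conj_ergodic_def space_borel_prob_Sub[OF \<mu>(1)])
  moreover have "emeasure \<mu> {H} \<le> emeasure \<mu> ?C"
    using self_in_conj_class[OF p HS] C_ev by (intro emeasure_mono) auto
  ultimately have C_one: "emeasure \<mu> ?C = 1" using H(2) by auto
  have "\<forall>V\<in>?C. {V} \<in> sets \<mu> \<and> emeasure \<mu> {V} = emeasure \<mu> {H}"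
    using sing CS atoms by blast
  hence "equidistributed_on \<mu> ?C"
    using fin C_ev C_one unfolding equidistributed_on_def by blast
  thus ?thesis using H(1) by blast
qed

theorem lemma3p1:
  fixes p n :: nat and s :: int and \<mu> :: "((int \<Rightarrow> nat \<Rightarrow> int) \<times> int) set measure"
  assumes "prime p" and "1 \<le> n" and "0 < s"
    and "borel_prob_Sub n p \<mu>" and "conj_invariant n p \<mu>" and "conj_ergodic n p \<mu>"
    and "emeasure \<mu> (pi1_fiber n p s) = 1"
  shows "(\<exists>H \<in> SubL n p. finite (conj_class n p H) \<and> conj_class n p H \<in> sets \<mu>
              \<and> emeasure \<mu> (conj_class n p H) = 1)
       \<and> countable {\<nu>. borel_prob_Sub n p \<nu> \<and> conj_invariant n p \<nu> \<and> conj_ergodic n p \<nu>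
              \<and> (\<exists>t::int. 1 \<le> t \<and> emeasure \<nu> (pi1_fiber n p t) = 1)}"
proof
  have p: "0 < p" using assms(1) prime_gt_0_nat by blast
  then obtain H where H: "H \<in> pi1_fiber n p s" "equidistributed_on \<mu> (conj_class n p H)"
    using ergodic_measure_equidistributed_on_conj_class[OF _ assms(3-7)] by blast
  have "H \<in> SubL n p" using H(1) by (simp add: pi1_fiber_def)
  moreover have "finite (conj_class n p H) \<and> conj_class n p H \<in> sets \<mu> \<and> emeasure \<mu> (conj_class n p H) = 1"
    using H(2) by (simp add: equidistributed_on_def)
  ultimately show "\<exists>H \<in> SubL n p. finite (conj_class n p H) \<and> conj_class n p H \<in> sets \<mu>
      \<and> emeasure \<mu> (conj_class n p H) = 1" by blast
  show "countable {\<nu>. borel_prob_Sub n p \<nu> \<and> conj_invariant n p \<nu> \<and> conj_ergodic n p \<nu>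
      \<and> (\<exists>t::int. 1 \<le> t \<and> emeasure \<nu> (pi1_fiber n p t) = 1)}" (is "countable ?S")
  proof (rule countable_equidistributed_measures)
    show "countable (\<Union>t\<in>{1..}. pi1_fiber n p t)"
      using countable_pi1_fiber[OF p] by (intro countable_UN[OF countableI_type]) simp
    show "prob_space \<nu>" "sets \<nu> = sets (borel_of_top (SubTop n p))" if "\<nu> \<in> ?S" for \<nu>
      using that by (simp_all add: borel_prob_Sub_def)
    show "\<exists>C \<subseteq> (\<Union>t\<in>{1..}. pi1_fiber n p t). equidistributed_on \<nu> C" if in_S: "\<nu> \<in> ?S" for \<nu>
    proof -
      obtain t where \<nu>: "borel_prob_Sub n p \<nu>" "conj_invariant n p \<nu>" "conj_ergodic n p \<nu>"
        and t: "1 \<le> t" "emeasure \<nu> (pi1_fiber n p t) = 1" using in_S by blast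
      then obtain H where "H \<in> pi1_fiber n p t" "equidistributed_on \<nu> (conj_class n p H)"
        using ergodic_measure_equidistributed_on_conj_class[OF p _ \<nu> t(2)] t(1) by auto
      thus ?thesis using conj_class_subset_pi1_fiber[OF p] t(1) by blast
    qed
  qed
qed

end
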